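(* Let $\mathcal{N}$ be a closed chemical reaction network, $\{\omega^1,\dots,\omega^d\}$ a reduced basis of $\Gamma^\perp$, $\widetilde f_\kappa$ the associated extended rate function, and $\kappa^o$, $g_{\kappa^o}$ as in the context. Then for each $c$, the determinant $\det(J_c(\widetilde f_\kappa))$, viewed as a polynomial in the rate constants $(k_{y\to y'})_{y\to y'\in\mathcal{R}}$, coincides with the sum of the terms of total degree $s$ (in these rate constants) in the expansion of $(-1)^d\det(J_c(g_{\kappa^o}))$.
   Context: A chemical reaction network $\mathcal{N}=(\mathcal{S},\mathcal{C},\mathcal{R})$ consists of a finite set of species $\mathcal{S}=\{S_1,\dots,S_n\}$, a finite set of complexes $\mathcal{C}\subset\mathbb{Z}_{\ge 0}^n$ (species $S_i$ identified with the $i$-th standard basis vector; the zero complex allowed), and a finite set of reactions $\mathcal{R}\subset\mathcal{C}\times\mathcal{C}$, written $y\to y'$, with $y\ne y'$. A rate vector is $\kappa=(k_{y\to y'})\in\mathbb{R}_+^{\mathcal{R}}$ ($\mathbb{R}_+$ the positive reals); the mass-action species formation rate function is $f_\kappa(c)=\sum_{y\to y'\in\mathcal{R}}k_{y\to y'}c^y(y'-y)$, $c^y=\prod_i c_i^{y_i}$, components $f_{\kappa,i}$. The stoichiometric subspace is $\Gamma=\mathrm{span}\{y'-y:y\to y'\in\mathcal{R}\}$, $s=\dim\Gamma$, $d=n-s$; closed means $\Gamma\ne\mathbb{R}^n$. A basis $\{\omega^1,\dots,\omega^d\}$ of $\Gamma^\perp$ with $\omega^i=(\lambda^i_1,\dots,\lambda^i_n)$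 is reduced if $\lambda^i_i=1$ and $\lambda^i_j=0$ for $j\in\{1,\dots,d\}$, $j\ne i$ (species assumed ordered so one exists). The extended rate function is $\widetilde f_\kappa(c)=(\omega^1\cdot c,\dots,\omega^d\cdot c,f_{\kappa,d+1}(c),\dots,f_{\kappa,n}(c))$; $J_c$ denotes the Jacobian at $c$. Let $\mathcal{O}(\mathcal{N})=\{i:S_i\to 0\notin\mathcal{R}\}$ and $\mathcal{N}^o$ the fully open network with reactions $\mathcal{R}\cup\{S_i\to 0:i=1,\dots,n\}$. The rate vector $\kappa^o$ of $\mathcal{N}^o$ agrees with $\kappa$ on $\mathcal{R}$ and has $k_{S_i\to 0}=1$ for $i\in\mathcal{O}(\mathcal{N})$; $g_{\kappa^o}(c)=f_\kappa(c)-(\delta_1c_1,\dots,\delta_nc_n)$ is the species formation rate function of $\mathcal{N}^o$ with rate vector $\kappa^o$, where $\delta_i=1$ if $i\in\mathcal{O}(\mathcal{N})$ and $0$ otherwise. *)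

theory Defs
  imports Complex_Main "HOL-Library.Function_Algebras" "HOL-Analysis.Derivative" "Jordan_Normal_Form.Determinant"
begin

(* Species are indexed 0..n-1 (the paper's S_1..S_n); a complex is a vector in Z_{>=0}^n,
   represented as a function nat => nat that vanishes outside {..<n}.
   A reaction y -> y' is the pair (y, y'). *)
type_synonym cplx = "nat \<Rightarrow> nat"
type_synonym reaction = "cplx \<times> cplx"

(* real vector space structure on nat => real (vectors of R^n are those vanishing at i >= n) *)
definition fscale :: "real \<Rightarrow> (nat \<Rightarrow> real) \<Rightarrow> (nat \<Rightarrow> real)" where
  "fscale r f = (\<lambda>i. r * f i)"

global_interpretation fvs: vector_space fscale
  by unfold_locales (auto simp: fscale_def fun_eq_iff algebra_simps)

definition Rn :: "nat \<Rightarrow> (nat \<Rightarrow> real) set" where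
  "Rn n = {v. \<forall>i\<ge>n. v i = 0}"

definition crn :: "nat \<Rightarrow> reaction set \<Rightarrow> bool" where
  "crn n R \<longleftrightarrow> finite R \<and> (\<forall>(y, y')\<in>R. y \<noteq> y' \<and> (\<forall>i\<ge>n. y i = 0 \<and> y' i = 0))"

definition reaction_vec :: "reaction \<Rightarrow> (nat \<Rightarrow> real)" where
  "reaction_vec r = (\<lambda>i. real (snd r i) - real (fst r i))"

definition stoich_space :: "reaction set \<Rightarrow> (nat \<Rightarrow> real) set" where
  "stoich_space R = fvs.span (reaction_vec ` R)"

definition stoich_dim :: "reaction set \<Rightarrow> nat" where
  "stoich_dim R = fvs.dim (stoich_space R)"

definition stoich_perp :: "nat \<Rightarrow> reaction set \<Rightarrow> (nat \<Rightarrow> real) set" where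
  "stoich_perp n R = {w \<in> Rn n. \<forall>v\<in>stoich_space R. (\<Sum>i<n. w i * v i) = 0}"

(* omega 0, ..., omega (d-1) (paper: omega^1..omega^d) is a reduced basis of Gamma^perp,
   d = n - s *)
definition reduced_basis :: "nat \<Rightarrow> reaction set \<Rightarrow> (nat \<Rightarrow> nat \<Rightarrow> real) \<Rightarrow> bool" where
  "reduced_basis n R \<omega> \<longleftrightarrow>
     (let d = n - stoich_dim R in
        (\<forall>i<d. \<omega> i \<in> stoich_perp n R) \<and> inj_on \<omega> {..<d} \<and>
        fvs.independent (\<omega> ` {..<d}) \<and> fvs.span (\<omega> ` {..<d}) = stoich_perp n R \<and>
        (\<forall>i<d. \<forall>j<d. \<omega> i j = (if i = j then 1 else 0)))"

definition rate_fun :: "nat \<Rightarrow> reaction set \<Rightarrow> (reaction \<Rightarrow> real) \<Rightarrow> (nat \<Rightarrow> real) \<Rightarrow> nat \<Rightarrow> real" where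
  "rate_fun n R \<kappa> c i = (\<Sum>r\<in>R. \<kappa> r * (\<Prod>j<n. c j ^ fst r j) * reaction_vec r i)"

definition ext_rate :: "nat \<Rightarrow> reaction set \<Rightarrow> (nat \<Rightarrow> nat \<Rightarrow> real) \<Rightarrow> (reaction \<Rightarrow> real) \<Rightarrow> (nat \<Rightarrow> real) \<Rightarrow> nat \<Rightarrow> real" where
  "ext_rate n R \<omega> \<kappa> c i =
     (if i < n - stoich_dim R then (\<Sum>j<n. \<omega> i j * c j) else rate_fun n R \<kappa> c i)"

definition outflow :: "nat \<Rightarrow> reaction" where
  "outflow i = ((\<lambda>j. if j = i then 1 else 0), (\<lambda>_. 0))"

definition open_set :: "nat \<Rightarrow> reaction set \<Rightarrow> nat set" where
  "open_set n R = {i. i < n \<and> outflow i \<notin> R}"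

definition open_rate :: "nat \<Rightarrow> reaction set \<Rightarrow> (reaction \<Rightarrow> real) \<Rightarrow> (nat \<Rightarrow> real) \<Rightarrow> nat \<Rightarrow> real" where
  "open_rate n R \<kappa> c i = rate_fun n R \<kappa> c i - (if i \<in> open_set n R then c i else 0)"

definition jac :: "nat \<Rightarrow> ((nat \<Rightarrow> real) \<Rightarrow> nat \<Rightarrow> real) \<Rightarrow> (nat \<Rightarrow> real) \<Rightarrow> real mat" where
  "jac n F c = mat n n (\<lambda>(i, j). deriv (\<lambda>t. F (c(j := t)) i) (c j))"

(* Polynomials in the rate constants (k_r)_{r in R} with real coefficients: a coefficient
   function on monomials m (exponent vectors, zero outside R) with finite support. *)
definition poly_in_rates :: "reaction set \<Rightarrow> ((reaction \<Rightarrow> nat) \<Rightarrow> real) \<Rightarrow> bool" where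
  "poly_in_rates R P \<longleftrightarrow> finite {m. P m \<noteq> 0} \<and> (\<forall>m. P m \<noteq> 0 \<longrightarrow> (\<forall>r. r \<notin> R \<longrightarrow> m r = 0))"

definition eval_rates :: "reaction set \<Rightarrow> ((reaction \<Rightarrow> nat) \<Rightarrow> real) \<Rightarrow> (reaction \<Rightarrow> real) \<Rightarrow> real" where
  "eval_rates R P \<kappa> = (\<Sum>m | P m \<noteq> 0. P m * (\<Prod>r\<in>R. \<kappa> r ^ m r))"

definition poly_rep :: "reaction set \<Rightarrow> ((reaction \<Rightarrow> nat) \<Rightarrow> real) \<Rightarrow> ((reaction \<Rightarrow> real) \<Rightarrow> real) \<Rightarrow> bool" where
  "poly_rep R P F \<longleftrightarrow> poly_in_rates R P \<and> (\<forall>\<kappa>. (\<forall>r\<in>R. \<kappa> r > 0) \<longrightarrow> F \<kappa> = eval_rates R P \<kappa>)"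

definition total_degree :: "reaction set \<Rightarrow> (reaction \<Rightarrow> nat) \<Rightarrow> nat" where
  "total_degree R m = (\<Sum>r\<in>R. m r)"

definition homog_part :: "reaction set \<Rightarrow> nat \<Rightarrow> ((reaction \<Rightarrow> nat) \<Rightarrow> real) \<Rightarrow> ((reaction \<Rightarrow> nat) \<Rightarrow> real)" where
  "homog_part R k P = (\<lambda>m. if total_degree R m = k then P m else 0)"

end

theory Submission
  imports Defs
begin

(* Scaling all rate constants by t scales the Jacobian J(f_kappa) by t.  Left-multiplying
   J(g_kappa^o) = J(f_kappa) - diag(delta) by the unimodular matrix T whose first d rows are the
   reduced basis and whose other rows are those of the identity, the rows omega^i J(f_kappa)
   vanish (omega^i is orthogonal to Gamma), and omega^i diag(delta) = omega^i because omega^i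
   vanishes on every species S_j with S_j -> 0 in R.  Hence det J(g) at t kappa equals the
   determinant of the matrix with rows -omega^i (i < d) and t J(f_kappa)_i - delta_i e_i (i >= d),
   a polynomial in t of degree at most s whose t^s coefficient is (-1)^d det J(f~_kappa).  On the
   other hand the t^s coefficient of a rate polynomial evaluated at t kappa is its degree-s
   homogeneous part at kappa; polynomial representations on the positive orthant are unique. *)

section \<open>Polynomials in the rate constants\<close>

definition rate_monomial :: "reaction set \<Rightarrow> (reaction \<Rightarrow> nat) \<Rightarrow> (reaction \<Rightarrow> real) \<Rightarrow> real" where
  "rate_monomial R m \<kappa> = (\<Prod>r\<in>R. \<kappa> r ^ m r)"

lemma rate_monomial_add:
  "rate_monomial R (\<lambda>r. m r + m' r) \<kappa> = rate_monomial R m \<kappa> * rate_monomial R m' \<kappa>"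
  unfolding rate_monomial_def by (simp add: power_add prod.distrib)

lemma rate_monomial_scale:
  "rate_monomial R m (\<lambda>r. t * \<kappa> r) = t ^ total_degree R m * rate_monomial R m \<kappa>"
  unfolding rate_monomial_def total_degree_def
  by (simp add: power_mult_distrib prod.distrib power_sum)

lemma eval_rates_eq_sum_superset:
  assumes "finite A" "{m. P m \<noteq> 0} \<subseteq> A"
  shows "eval_rates R P \<kappa> = (\<Sum>m\<in>A. P m * rate_monomial R m \<kappa>)"
  unfolding eval_rates_def rate_monomial_def
  by (rule sum.mono_neutral_left) (use assms in auto)

lemma eval_rates_scale_rates:
  assumes "finite {m. P m \<noteq> 0}"
  shows "eval_rates R P (\<lambda>r. t * \<kappa> r) =
           (\<Sum>m | P m \<noteq> 0. (P m * rate_monomial R m \<kappa>) * t ^ total_degree R m)"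
  using eval_rates_eq_sum_superset[OF assms order_refl]
  by (simp add: rate_monomial_scale mult_ac)

lemma poly_in_rates_homog_part:
  "poly_in_rates R P \<Longrightarrow> poly_in_rates R (homog_part R k P)"
  unfolding poly_in_rates_def homog_part_def by (auto elim!: rev_finite_subset)

lemma eval_rates_homog_part:
  assumes "finite {m. P m \<noteq> 0}"
  shows "eval_rates R (homog_part R k P) \<kappa> =
           (\<Sum>m\<in>{m\<in>{m. P m \<noteq> 0}. total_degree R m = k}. P m * rate_monomial R m \<kappa>)"
proof -
  have supp: "{m. homog_part R k P m \<noteq> 0} \<subseteq> {m. P m \<noteq> 0}" by (auto simp: homog_part_def)
  show ?thesis
    unfolding sum.inter_filter[OF assms] eval_rates_eq_sum_superset[OF assms supp]
    by (intro sum.cong) (auto simp: homog_part_def)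
qed

lemma sum_powers_coeff_eq:
  fixes b :: "'a \<Rightarrow> real" and e :: "'a \<Rightarrow> nat" and b' :: "'b \<Rightarrow> real" and e' :: "'b \<Rightarrow> nat"
  assumes "finite A" "finite B"
    and "\<And>t. t > 0 \<Longrightarrow> (\<Sum>m\<in>A. b m * t ^ e m) = (\<Sum>m\<in>B. b' m * t ^ e' m)"
  shows "(\<Sum>m\<in>{m\<in>A. e m = k}. b m) = (\<Sum>m\<in>{m\<in>B. e' m = k}. b' m)"
proof -
  define p where "p = (\<Sum>m\<in>A. monom (b m) (e m)) - (\<Sum>m\<in>B. monom (b' m) (e' m))"
  have roots: "{0<..} \<subseteq> {t. poly p t = 0}"
    using assms(3) by (auto simp: p_def poly_sum poly_monom)
  have "p = 0"
  proof (rule ccontr)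
    assume "p \<noteq> 0"
    then have "finite {t. poly p t = 0}" by (rule poly_roots_finite)
    with roots infinite_Ioi[of "0::real"] show False by (blast dest: finite_subset)
  qed
  then have "coeff p k = 0" by simp
  then show ?thesis
    using assms(1,2) by (simp add: p_def coeff_diff coeff_sum coeff_monom sum.inter_filter)
qed

text \<open>Requiring only that the exponent vectors in \<open>A\<close> be determined by their restriction to
  \<open>V\<close> (rather than vanish outside \<open>V\<close>) lets the induction pass to the slice of \<open>A\<close> with a
  fixed exponent of the removed variable, which is isolated by comparing coefficients in that
  variable with the empty sum.\<close>

lemma monomial_sum_eq_0_imp_coeff_eq_0:
  fixes c :: "('a \<Rightarrow> nat) \<Rightarrow> real"
  assumes "finite V" "finite A"
    and "\<And>m m'. m \<in> A \<Longrightarrow> m' \<in> A \<Longrightarrow> \<forall>r\<in>V. m r = m' r \<Longrightarrow> m = m'"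
    and "\<And>\<kappa>. \<forall>r\<in>V. \<kappa> r > 0 \<Longrightarrow> (\<Sum>m\<in>A. c m * (\<Prod>r\<in>V. \<kappa> r ^ m r)) = 0"
    and "m \<in> A"
  shows "c m = 0"
  using assms
proof (induction V arbitrary: A rule: finite_induct)
  case empty
  then have "A = {m}" by blast
  then show ?case using empty.prems(3)[of "\<lambda>_. 1"] by simp
next
  case (insert r V)
  define A' where "A' = {m'\<in>A. m' r = m r}"
  have "(\<Sum>m'\<in>A'. c m' * (\<Prod>x\<in>V. \<kappa> x ^ m' x)) = 0" if pos: "\<forall>x\<in>V. \<kappa> x > 0" for \<kappa>
  proof -
    have "(\<Sum>m'\<in>A. (c m' * (\<Prod>x\<in>V. \<kappa> x ^ m' x)) * t ^ m' r) = (\<Sum>m'\<in>({}::nat set). 0 * t ^ 0)"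
      if "t > 0" for t :: real
    proof -
      have "(\<Prod>x\<in>V. (\<kappa>(r := t)) x ^ m' x) = (\<Prod>x\<in>V. \<kappa> x ^ m' x)" for m'
        using insert.hyps by (intro prod.cong) auto
      then have "(\<Prod>x\<in>insert r V. (\<kappa>(r := t)) x ^ m' x) = t ^ m' r * (\<Prod>x\<in>V. \<kappa> x ^ m' x)" for m'
        using insert.hyps by (simp del: fun_upd_apply) simp
      then show ?thesis
        using insert.prems(3)[of "\<kappa>(r := t)"] pos that by (simp add: mult_ac)
    qed
    from sum_powers_coeff_eq[OF insert.prems(1) finite.emptyI this, of "m r"]
    show ?thesis by (simp add: A'_def)
  qed
  then show ?case
    using insert.prems by (intro insert.IH[of A']) (auto simp: A'_def)
qed

lemma poly_rep_unique:
  assumes "finite R" "poly_rep R P F" "poly_rep R Q F"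
  shows "P = Q"
proof
  fix m
  define A where "A = {m. P m \<noteq> 0} \<union> {m. Q m \<noteq> 0}"
  have fin: "finite A" and supp: "\<And>m r. m \<in> A \<Longrightarrow> r \<notin> R \<Longrightarrow> m r = 0"
    using assms(2,3) unfolding A_def poly_rep_def poly_in_rates_def by auto
  have vanish: "(\<Sum>m\<in>A. (P m - Q m) * (\<Prod>r\<in>R. \<kappa> r ^ m r)) = 0"
    if "\<forall>r\<in>R. \<kappa> r > 0" for \<kappa>
  proof -
    have "eval_rates R P \<kappa> = eval_rates R Q \<kappa>"
      using assms(2,3) that by (simp add: poly_rep_def)
    then show ?thesis
      using eval_rates_eq_sum_superset[OF fin, of P R \<kappa>] eval_rates_eq_sum_superset[OF fin, of Q R \<kappa>]
      by (auto simp: A_def rate_monomial_def left_diff_distrib sum_subtractf)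
  qed
  have "P m - Q m = 0" if "m \<in> A"
    by (rule monomial_sum_eq_0_imp_coeff_eq_0[OF assms(1) fin _ vanish that]) (metis ext supp)
  then show "P m = Q m" by (cases "m \<in> A") (auto simp: A_def)
qed

text \<open>Polynomial functions of the rate constants, given by a list of (exponent vector, coefficient)
  pairs with repetitions allowed, so that products are obtained without collecting terms.\<close>

definition rate_polyfun :: "reaction set \<Rightarrow> ((reaction \<Rightarrow> real) \<Rightarrow> real) \<Rightarrow> bool" where
  "rate_polyfun R F \<longleftrightarrow> (\<exists>L. (\<forall>p\<in>set L. \<forall>r. r \<notin> R \<longrightarrow> fst p r = 0) \<and>
      (\<forall>\<kappa>. F \<kappa> = (\<Sum>p\<leftarrow>L. snd p * rate_monomial R (fst p) \<kappa>)))"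

lemma rate_polyfun_const: "rate_polyfun R (\<lambda>\<kappa>. a)"
  unfolding rate_polyfun_def by (rule exI[of _ "[(\<lambda>_. 0, a)]"]) (simp add: rate_monomial_def)

lemma rate_polyfun_var:
  assumes "finite R" "r \<in> R"
  shows "rate_polyfun R (\<lambda>\<kappa>. \<kappa> r)"
proof -
  have "rate_monomial R (\<lambda>x. if x = r then 1 else 0) \<kappa> = \<kappa> r" for \<kappa>
    using assms by (simp add: rate_monomial_def if_distrib prod.delta' cong: if_cong)
  then show ?thesis
    unfolding rate_polyfun_def using assms(2)
    by (intro exI[of _ "[(\<lambda>x. if x = r then 1 else 0, 1)]"]) auto
qed

lemma rate_polyfun_add:
  "rate_polyfun R F \<Longrightarrow> rate_polyfun R G \<Longrightarrow> rate_polyfun R (\<lambda>\<kappa>. F \<kappa> + G \<kappa>)"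
  unfolding rate_polyfun_def by (elim exE conjE, rename_tac L1 L2, rule_tac x="L1 @ L2" in exI) auto

lemma sum_list_mult_sum_list:
  fixes f g :: "_ \<Rightarrow> 'a::comm_semiring_1"
  shows "(\<Sum>x\<leftarrow>xs. f x) * (\<Sum>y\<leftarrow>ys. g y) = (\<Sum>z\<leftarrow>List.product xs ys. f (fst z) * g (snd z))"
  by (induction xs) (simp_all add: distrib_right sum_list_const_mult o_def)

lemma rate_polyfun_mult:
  assumes "rate_polyfun R F" "rate_polyfun R G"
  shows "rate_polyfun R (\<lambda>\<kappa>. F \<kappa> * G \<kappa>)"
proof -
  obtain L1 L2
    where L1: "\<forall>p\<in>set L1. \<forall>r. r \<notin> R \<longrightarrow> fst p r = 0"
              "\<And>\<kappa>. F \<kappa> = (\<Sum>p\<leftarrow>L1. snd p * rate_monomial R (fst p) \<kappa>)"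
      and L2: "\<forall>p\<in>set L2. \<forall>r. r \<notin> R \<longrightarrow> fst p r = 0"
              "\<And>\<kappa>. G \<kappa> = (\<Sum>p\<leftarrow>L2. snd p * rate_monomial R (fst p) \<kappa>)"
    using assms unfolding rate_polyfun_def by blast
  define L where "L = map (\<lambda>z. (\<lambda>r. fst (fst z) r + fst (snd z) r, snd (fst z) * snd (snd z)))
                          (List.product L1 L2)"
  have "F \<kappa> * G \<kappa> = (\<Sum>p\<leftarrow>L. snd p * rate_monomial R (fst p) \<kappa>)" for \<kappa>
    unfolding L1(2) L2(2) sum_list_mult_sum_list L_def
    by (simp add: rate_monomial_add o_def ac_simps)
  moreover have "\<forall>p\<in>set L. \<forall>r. r \<notin> R \<longrightarrow> fst p r = 0"
    using L1(1) L2(1) unfolding L_def by auto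
  ultimately show ?thesis unfolding rate_polyfun_def by blast
qed

lemma rate_polyfun_diff:
  assumes "rate_polyfun R F" "rate_polyfun R G"
  shows "rate_polyfun R (\<lambda>\<kappa>. F \<kappa> - G \<kappa>)"
  using rate_polyfun_add[OF assms(1) rate_polyfun_mult[OF rate_polyfun_const assms(2)], of "-1"]
  by simp

lemma rate_polyfun_sum:
  "(\<And>i. i \<in> I \<Longrightarrow> rate_polyfun R (F i)) \<Longrightarrow> rate_polyfun R (\<lambda>\<kappa>. \<Sum>i\<in>I. F i \<kappa>)"
  by (induction I rule: infinite_finite_induct) (simp_all add: rate_polyfun_const rate_polyfun_add)

lemma rate_polyfun_prod:
  "(\<And>i. i \<in> I \<Longrightarrow> rate_polyfun R (F i)) \<Longrightarrow> rate_polyfun R (\<lambda>\<kappa>. \<Prod>i\<in>I. F i \<kappa>)"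
  by (induction I rule: infinite_finite_induct) (simp_all add: rate_polyfun_const rate_polyfun_mult)

lemma sum_collect_fst:
  fixes g :: "'a \<Rightarrow> 'b::comm_semiring_1"
  assumes "finite A" "fst ` set L \<subseteq> A"
  shows "(\<Sum>m\<in>A. (\<Sum>p\<leftarrow>L. if fst p = m then snd p else 0) * g m) = (\<Sum>p\<leftarrow>L. snd p * g (fst p))"
  using assms(2)
proof (induction L)
  case (Cons p L)
  have "(\<Sum>m\<in>A. (if fst p = m then snd p else 0) * g m) = (\<Sum>m\<in>A. if m = fst p then snd p * g m else 0)"
    by (intro sum.cong) auto
  also have "\<dots> = snd p * g (fst p)"
    using assms(1) Cons.prems by simp
  finally show ?case
    using Cons by (simp add: distrib_right sum.distrib)
qed simp

lemma rate_polyfun_imp_poly_rep: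
  assumes "rate_polyfun R F"
  shows "\<exists>P. poly_rep R P F"
proof -
  obtain L where supp: "\<forall>p\<in>set L. \<forall>r. r \<notin> R \<longrightarrow> fst p r = 0"
    and F: "\<And>\<kappa>. F \<kappa> = (\<Sum>p\<leftarrow>L. snd p * rate_monomial R (fst p) \<kappa>)"
    using assms unfolding rate_polyfun_def by blast
  define P where "P m = (\<Sum>p\<leftarrow>L. if fst p = m then snd p else 0)" for m
  have "P m = 0" if "m \<notin> fst ` set L" for m
    unfolding P_def using that by (induction L) auto
  then have supp_P: "{m. P m \<noteq> 0} \<subseteq> fst ` set L" by blast
  have "m r = 0" if "P m \<noteq> 0" "r \<notin> R" for m r
  proof -
    from supp_P that(1) obtain p where "p \<in> set L" "m = fst p" by blast
    moreover have "fst p r = 0" using supp \<open>p \<in> set L\<close> that(2) by blast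
    ultimately show ?thesis by simp
  qed
  moreover have "finite {m. P m \<noteq> 0}"
    using supp_P by (rule finite_subset) simp
  ultimately have "poly_in_rates R P"
    unfolding poly_in_rates_def by blast
  moreover have "F \<kappa> = eval_rates R P \<kappa>" for \<kappa>
    unfolding F eval_rates_eq_sum_superset[OF finite_imageI[OF finite_set] supp_P] P_def
    by (rule sum_collect_fst[symmetric]) simp_all
  ultimately show ?thesis unfolding poly_rep_def by blast
qed

section \<open>Determinants\<close>

lemma det_mat_eq_sum_perm:
  "det (mat n n f) = (\<Sum>p | p permutes {0..<n}. signof p * (\<Prod>i=0..<n. f (i, p i)))"
  by (auto simp: det_def'[OF mat_carrier] permutes_in_image intro!: sum.cong prod.cong)

lemma prod_if_affine:
  fixes x y :: "'i \<Rightarrow> 'a::comm_semiring_1"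
  assumes "finite N" "S \<subseteq> N"
  shows "(\<Prod>i\<in>N. if i \<in> S then t * x i + y i else y i) =
           (\<Sum>U\<in>Pow S. t ^ card U * (\<Prod>i\<in>N. if i \<in> U then x i else y i))"
proof -
  have fS: "finite S" using assms finite_subset by blast
  have split: "(\<Prod>i\<in>N. if i \<in> U then h i else y i) = (\<Prod>i\<in>U. h i) * (\<Prod>i\<in>N - U. y i)"
    if "U \<subseteq> N" for U h
    using that assms(1) by (simp add: prod.If_cases Int_absorb1 Diff_eq[symmetric])
  have "(\<Prod>i\<in>N. if i \<in> S then t * x i + y i else y i) =
          (\<Sum>U\<in>Pow S. (\<Prod>i\<in>U. t * x i) * (\<Prod>i\<in>S - U. y i)) * (\<Prod>i\<in>N - S. y i)"
    by (simp add: split[OF assms(2)] prod_add[OF fS])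
  also have "\<dots> = (\<Sum>U\<in>Pow S. t ^ card U * (\<Prod>i\<in>N. if i \<in> U then x i else y i))"
    unfolding sum_distrib_right
  proof (rule sum.cong[OF refl])
    fix U assume "U \<in> Pow S"
    then have "U \<subseteq> S" "U \<subseteq> N" using assms(2) by auto
    have "N - U - (S - U) = N - S" using \<open>U \<subseteq> S\<close> by blast
    then have "(\<Prod>i\<in>N - U. y i) = (\<Prod>i\<in>N - S. y i) * (\<Prod>i\<in>S - U. y i)"
      using prod.subset_diff[of "S - U" "N - U" y] assms by auto
    then show "(\<Prod>i\<in>U. t * x i) * (\<Prod>i\<in>S - U. y i) * (\<Prod>i\<in>N - S. y i) =
               t ^ card U * (\<Prod>i\<in>N. if i \<in> U then x i else y i)"
      by (simp add: split[OF \<open>U \<subseteq> N\<close>] prod.distrib mult_ac)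
  qed
  finally show ?thesis .
qed

lemma det_mat_rows_affine:
  fixes X Y :: "nat \<Rightarrow> nat \<Rightarrow> 'a::comm_ring_1"
  assumes "S \<subseteq> {0..<n}"
  shows "det (mat n n (\<lambda>(i, j). if i \<in> S then t * X i j + Y i j else Y i j)) =
           (\<Sum>U\<in>Pow S. t ^ card U * det (mat n n (\<lambda>(i, j). if i \<in> U then X i j else Y i j)))"
proof -
  let ?row = "\<lambda>U p i. if i \<in> U then X i (p i) else Y i (p i)"
  have "det (mat n n (\<lambda>(i, j). if i \<in> S then t * X i j + Y i j else Y i j)) =
          (\<Sum>p | p permutes {0..<n}. signof p * (\<Sum>U\<in>Pow S. t ^ card U * (\<Prod>i=0..<n. ?row U p i)))"
    using assms by (simp add: det_mat_eq_sum_perm prod_if_affine)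
  also have "\<dots> = (\<Sum>U\<in>Pow S. \<Sum>p | p permutes {0..<n}. t ^ card U * (signof p * (\<Prod>i=0..<n. ?row U p i)))"
    by (subst sum.swap) (simp add: sum_distrib_left mult_ac)
  also have "\<dots> = (\<Sum>U\<in>Pow S. t ^ card U * det (mat n n (\<lambda>(i, j). if i \<in> U then X i j else Y i j)))"
    by (simp add: det_mat_eq_sum_perm sum_distrib_left)
  finally show ?thesis .
qed

lemma det_mat_neg_initial_rows:
  fixes A B :: "nat \<Rightarrow> nat \<Rightarrow> 'a::comm_ring_1"
  assumes "d \<le> n"
  shows "det (mat n n (\<lambda>(i, j). if i < d then - A i j else B i j)) =
           (-1) ^ d * det (mat n n (\<lambda>(i, j). if i < d then A i j else B i j))"
proof -
  have "{0..<n} \<inter> {i. i < d} = {0..<d}" using assms by auto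
  then have signs: "(\<Prod>i=0..<n. if i < d then -1 else 1) = ((-1) ^ d :: 'a)"
    by (simp add: prod.If_cases)
  have "(\<Prod>i=0..<n. if i < d then - A i (p i) else B i (p i)) =
          (-1) ^ d * (\<Prod>i=0..<n. if i < d then A i (p i) else B i (p i))" for p
    unfolding signs[symmetric] prod.distrib[symmetric] by (intro prod.cong) auto
  then show ?thesis by (simp add: det_mat_eq_sum_perm sum_distrib_left mult_ac)
qed

section \<open>Stoichiometry\<close>

lemma sum_fun_apply: "(\<Sum>a\<in>A. f a) x = (\<Sum>a\<in>A. f a x)"
  by (induction A rule: infinite_finite_induct) auto

lemma stoich_dim_le:
  assumes "crn n R"
  shows "stoich_dim R \<le> n"
proof -
  define e where "e i = (\<lambda>k. if k = i then 1 else 0 :: real)" for i :: nat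
  have "reaction_vec r \<in> fvs.span (e ` {..<n})" if "r \<in> R" for r
  proof -
    have "reaction_vec r = (\<Sum>i<n. fscale (reaction_vec r i) (e i))"
      using assms that
      by (force simp: crn_def reaction_vec_def sum_fun_apply fscale_def e_def if_distrib
          sum.delta' cong: if_cong)
    also have "\<dots> \<in> fvs.span (e ` {..<n})"
      by (intro fvs.span_sum fvs.span_scale fvs.span_base) simp
    finally show ?thesis .
  qed
  then have "stoich_space R \<subseteq> fvs.span (e ` {..<n})"
    unfolding stoich_space_def by (intro fvs.span_minimal) auto
  then have "stoich_dim R \<le> card (e ` {..<n})"
    unfolding stoich_dim_def by (rule fvs.dim_le_card) simp
  also have "\<dots> \<le> n" using card_image_le[of "{..<n}" e] by simp
  finally show ?thesis .
qed

lemma stoich_perp_orth_reaction_vec: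
  assumes "w \<in> stoich_perp n R" "r \<in> R"
  shows "(\<Sum>k<n. w k * reaction_vec r k) = 0"
  using assms fvs.span_base[of "reaction_vec r" "reaction_vec ` R"]
  unfolding stoich_perp_def stoich_space_def by auto

lemma stoich_perp_zero_off_open:
  assumes "w \<in> stoich_perp n R" "j < n" "j \<notin> open_set n R"
  shows "w j = 0"
proof -
  have "outflow j \<in> R" using assms(2,3) unfolding open_set_def by simp
  then have "(\<Sum>k<n. w k * reaction_vec (outflow j) k) = 0"
    by (rule stoich_perp_orth_reaction_vec[OF assms(1)])
  moreover have "(\<Sum>k<n. w k * reaction_vec (outflow j) k) = - w j"
    using assms(2) by (simp add: reaction_vec_def outflow_def if_distrib sum.delta' cong: if_cong)
  ultimately show ?thesis by simp
qed

section \<open>Jacobians\<close>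

definition rate_jac :: "nat \<Rightarrow> reaction set \<Rightarrow> (reaction \<Rightarrow> real) \<Rightarrow> (nat \<Rightarrow> real) \<Rightarrow> nat \<Rightarrow> nat \<Rightarrow> real" where
  "rate_jac n R \<kappa> c i j =
     (\<Sum>r\<in>R. \<kappa> r * deriv (\<lambda>t. \<Prod>l<n. (c(j := t)) l ^ fst r l) (c j) * reaction_vec r i)"

definition open_diag :: "nat \<Rightarrow> reaction set \<Rightarrow> nat \<Rightarrow> nat \<Rightarrow> real" where
  "open_diag n R i j = (if i \<in> open_set n R \<and> i = j then 1 else 0)"

lemma has_real_derivative_fun_upd:
  fixes c :: "nat \<Rightarrow> real"
  shows "((\<lambda>t. (c(j := t)) i) has_real_derivative (if i = j then 1 else 0)) (at x)"
  by (cases "i = j") (auto intro!: derivative_eq_intros)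

lemma monomial_fun_upd_differentiable:
  fixes c :: "nat \<Rightarrow> real"
  shows "(\<lambda>t. \<Prod>l<n. (c(j := t)) l ^ y l) differentiable at x"
  unfolding real_differentiable_def
  by (rule exI has_field_derivative_prod DERIV_power has_real_derivative_fun_upd)+

lemma rate_fun_has_partial_derivative:
  "((\<lambda>t. rate_fun n R \<kappa> (c(j := t)) i) has_real_derivative rate_jac n R \<kappa> c i j) (at (c j))"
  unfolding rate_fun_def rate_jac_def
  by (intro DERIV_sum DERIV_cmult DERIV_cmult_right monomial_fun_upd_differentiable
      DERIV_deriv_iff_real_differentiable[THEN iffD2])

lemma rate_jac_scale_rates:
  "rate_jac n R (\<lambda>r. t * \<kappa> r) c i j = t * rate_jac n R \<kappa> c i j"
  unfolding rate_jac_def by (simp add: sum_distrib_left mult_ac)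

lemma jac_open_rate:
  "jac n (open_rate n R \<kappa>) c = mat n n (\<lambda>(i, j). rate_jac n R \<kappa> c i j - open_diag n R i j)"
proof -
  have "((\<lambda>t. open_rate n R \<kappa> (c(j := t)) i) has_real_derivative
           rate_jac n R \<kappa> c i j - open_diag n R i j) (at (c j))" for i j
  proof -
    have "((\<lambda>t. if i \<in> open_set n R then (c(j := t)) i else 0) has_real_derivative
            open_diag n R i j) (at (c j))"
      by (cases "i \<in> open_set n R")
        (simp_all add: open_diag_def has_real_derivative_fun_upd del: fun_upd_apply)
    then show ?thesis
      unfolding open_rate_def by (intro DERIV_diff rate_fun_has_partial_derivative)
  qed
  then show ?thesis
    unfolding jac_def by (auto intro!: cong_mat DERIV_imp_deriv)
qed

lemma jac_ext_rate:
  "jac n (ext_rate n R \<omega> \<kappa>) c =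
     mat n n (\<lambda>(i, j). if i < n - stoich_dim R then \<omega> i j else rate_jac n R \<kappa> c i j)"
proof -
  have "((\<lambda>t. \<Sum>l<n. \<omega> i l * (c(j := t)) l) has_real_derivative \<omega> i j) (at (c j))"
    if "j < n" for i j
  proof -
    have "((\<lambda>t. \<Sum>l<n. \<omega> i l * (c(j := t)) l) has_real_derivative
           (\<Sum>l<n. \<omega> i l * (if l = j then 1 else 0))) (at (c j))"
      by (intro DERIV_sum DERIV_cmult has_real_derivative_fun_upd)
    then show ?thesis
      using that by (simp add: if_distrib sum.delta' cong: if_cong)
  qed
  then show ?thesis
    unfolding jac_def ext_rate_def
    by (auto intro!: cong_mat DERIV_imp_deriv rate_fun_has_partial_derivative simp del: fun_upd_apply)
qed

lemma rate_polyfun_det_jac_open_rate: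
  assumes "finite R"
  shows "rate_polyfun R (\<lambda>\<kappa>. det (jac n (open_rate n R \<kappa>) c))"
  unfolding jac_open_rate det_mat_eq_sum_perm case_prod_conv rate_jac_def
  by (intro rate_polyfun_sum rate_polyfun_mult rate_polyfun_const rate_polyfun_prod
      rate_polyfun_diff rate_polyfun_var assms)

lemma stoich_perp_orth_rate_jac:
  assumes "w \<in> stoich_perp n R"
  shows "(\<Sum>k<n. w k * rate_jac n R \<kappa> c k j) = 0"
proof -
  define a where "a r = \<kappa> r * deriv (\<lambda>t. \<Prod>l<n. (c(j := t)) l ^ fst r l) (c j)" for r
  have "(\<Sum>k<n. w k * rate_jac n R \<kappa> c k j) = (\<Sum>k<n. \<Sum>r\<in>R. a r * (w k * reaction_vec r k))"
    unfolding rate_jac_def a_def by (simp add: sum_distrib_left mult_ac)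
  also have "\<dots> = (\<Sum>r\<in>R. a r * (\<Sum>k<n. w k * reaction_vec r k))"
    by (subst sum.swap) (simp add: sum_distrib_left)
  also have "\<dots> = 0"
    using stoich_perp_orth_reaction_vec[OF assms] by simp
  finally show ?thesis .
qed


section \<open>The reduced basis\<close>

definition reduced_completion :: "nat \<Rightarrow> nat \<Rightarrow> (nat \<Rightarrow> nat \<Rightarrow> real) \<Rightarrow> real mat" where
  "reduced_completion n d \<omega> = mat n n (\<lambda>(i, j). if i < d then \<omega> i j else if i = j then 1 else 0)"

lemma det_reduced_completion:
  assumes "\<forall>i<d. \<forall>j<d. \<omega> i j = (if i = j then 1 else 0)"
  shows "det (reduced_completion n d \<omega>) = 1"
proof -
  let ?T = "reduced_completion n d \<omega>"
  have "upper_triangular ?T"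
    using assms unfolding upper_triangular_def reduced_completion_def by auto
  then have "det ?T = prod_list (diag_mat ?T)"
    by (rule det_upper_triangular[of _ n]) (simp add: reduced_completion_def)
  also have "diag_mat ?T = replicate n 1"
    using assms by (intro nth_equalityI) (auto simp: diag_mat_def reduced_completion_def)
  finally show ?thesis by simp
qed

lemma reduced_completion_mult_jac_open_rate:
  assumes perp: "\<forall>i<d. \<omega> i \<in> stoich_perp n R"
  shows "reduced_completion n d \<omega> * jac n (open_rate n R \<kappa>) c =
           mat n n (\<lambda>(i, j). if i < d then - \<omega> i j else rate_jac n R \<kappa> c i j - open_diag n R i j)"
proof (rule eq_matI)
  fix i j assume "i < dim_row (mat n n (\<lambda>(i, j). if i < d then - \<omega> i j
                                          else rate_jac n R \<kappa> c i j - open_diag n R i j))"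
    and "j < dim_col (mat n n (\<lambda>(i, j). if i < d then - \<omega> i j
                                          else rate_jac n R \<kappa> c i j - open_diag n R i j))"
  then have i: "i < n" and j: "j < n" by auto
  let ?G = "\<lambda>k. rate_jac n R \<kappa> c k j - open_diag n R k j"
  have "(reduced_completion n d \<omega> * jac n (open_rate n R \<kappa>) c) $$ (i, j) =
          (\<Sum>k<n. (if i < d then \<omega> i k else if i = k then 1 else 0) * ?G k)"
    using i j by (simp add: reduced_completion_def jac_open_rate scalar_prod_def atLeast0LessThan)
  also have "\<dots> = (if i < d then - \<omega> i j else ?G i)"
  proof (cases "i < d")
    case True
    then have w: "\<omega> i \<in> stoich_perp n R" using perp by simp
    have "(\<Sum>k<n. \<omega> i k * ?G k) =
            (\<Sum>k<n. \<omega> i k * rate_jac n R \<kappa> c k j) - (\<Sum>k<n. \<omega> i k * open_diag n R k j)"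
      by (simp add: right_diff_distrib sum_subtractf)
    also have "(\<Sum>k<n. \<omega> i k * open_diag n R k j) =
                 (\<Sum>k<n. if k = j then (if j \<in> open_set n R then \<omega> i j else 0) else 0)"
      by (intro sum.cong) (auto simp: open_diag_def)
    also have "\<dots> = (if j \<in> open_set n R then \<omega> i j else 0)"
      using j by simp
    also have "\<dots> = \<omega> i j"
      using stoich_perp_zero_off_open[OF w j] by auto
    also have "(\<Sum>k<n. \<omega> i k * rate_jac n R \<kappa> c k j) = 0"
      by (rule stoich_perp_orth_rate_jac[OF w])
    finally show ?thesis using True by simp
  next
    case False
    have "(\<Sum>k<n. (if i = k then 1 else 0) * ?G k) = (\<Sum>k<n. if k = i then ?G i else 0)"
      by (intro sum.cong) auto
    then show ?thesis using False i by simp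
  qed
  finally show "(reduced_completion n d \<omega> * jac n (open_rate n R \<kappa>) c) $$ (i, j) =
      mat n n (\<lambda>(i, j). if i < d then - \<omega> i j else rate_jac n R \<kappa> c i j - open_diag n R i j) $$ (i, j)"
    using i j by simp
qed (simp_all add: reduced_completion_def jac_def)

lemma det_jac_open_rate_eq:
  assumes "\<forall>i<d. \<omega> i \<in> stoich_perp n R" and "\<forall>i<d. \<forall>j<d. \<omega> i j = (if i = j then 1 else 0)"
  shows "det (jac n (open_rate n R \<kappa>) c) =
           det (mat n n (\<lambda>(i, j). if i < d then - \<omega> i j else rate_jac n R \<kappa> c i j - open_diag n R i j))"
proof -
  have "det (reduced_completion n d \<omega> * jac n (open_rate n R \<kappa>) c) =
          det (reduced_completion n d \<omega>) * det (jac n (open_rate n R \<kappa>) c)"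
    by (rule det_mult) (auto simp: reduced_completion_def jac_def)
  then show ?thesis
    by (simp add: reduced_completion_mult_jac_open_rate[OF assms(1)] det_reduced_completion[OF assms(2)])
qed

lemma det_jac_open_rate_scale_rates:
  assumes "\<forall>i<d. \<omega> i \<in> stoich_perp n R" and "\<forall>i<d. \<forall>j<d. \<omega> i j = (if i = j then 1 else 0)"
  shows "det (jac n (open_rate n R (\<lambda>r. t * \<kappa> r)) c) =
           (\<Sum>U\<in>Pow {d..<n}. t ^ card U * det (mat n n (\<lambda>(i, j). if i \<in> U then rate_jac n R \<kappa> c i j
                                   else if i < d then - \<omega> i j else - open_diag n R i j)))"
proof -
  have "mat n n (\<lambda>(i, j). if i < d then - \<omega> i j
                           else rate_jac n R (\<lambda>r. t * \<kappa> r) c i j - open_diag n R i j) =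
        mat n n (\<lambda>(i, j). if i \<in> {d..<n}
                           then t * rate_jac n R \<kappa> c i j + (if i < d then - \<omega> i j else - open_diag n R i j)
                           else if i < d then - \<omega> i j else - open_diag n R i j)"
    by (rule cong_mat) (auto simp: rate_jac_scale_rates)
  then show ?thesis
    unfolding det_jac_open_rate_eq[OF assms] by (simp only:) (rule det_mat_rows_affine, auto)
qed

lemma det_top_rows_eq_det_jac_ext_rate:
  "det (mat n n (\<lambda>(i, j). if i \<in> {n - stoich_dim R..<n} then rate_jac n R \<kappa> c i j
                         else if i < n - stoich_dim R then - \<omega> i j else - open_diag n R i j)) =
     (-1) ^ (n - stoich_dim R) * det (jac n (ext_rate n R \<omega> \<kappa>) c)"
proof -
  have "mat n n (\<lambda>(i, j). if i \<in> {n - stoich_dim R..<n} then rate_jac n R \<kappa> c i j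
                          else if i < n - stoich_dim R then - \<omega> i j else - open_diag n R i j) =
        mat n n (\<lambda>(i, j). if i < n - stoich_dim R then - \<omega> i j else rate_jac n R \<kappa> c i j)"
    by (rule cong_mat) auto
  then show ?thesis
    by (simp add: det_mat_neg_initial_rows jac_ext_rate)
qed

lemma homog_part_det_jac_open_rate:
  assumes "stoich_dim R \<le> n"
    and perp: "\<forall>i<n - stoich_dim R. \<omega> i \<in> stoich_perp n R"
    and red: "\<forall>i<n - stoich_dim R. \<forall>j<n - stoich_dim R. \<omega> i j = (if i = j then 1 else 0)"
    and Q: "poly_rep R Q (\<lambda>\<kappa>. det (jac n (open_rate n R \<kappa>) c))"
    and pos: "\<forall>r\<in>R. \<kappa> r > 0"
  shows "eval_rates R (homog_part R (stoich_dim R) Q) \<kappa> =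
           (-1) ^ (n - stoich_dim R) * det (jac n (ext_rate n R \<omega> \<kappa>) c)"
proof -
  let ?s = "stoich_dim R" and ?d = "n - stoich_dim R"
  define D where "D U = det (mat n n (\<lambda>(i, j). if i \<in> U then rate_jac n R \<kappa> c i j
                                      else if i < ?d then - \<omega> i j else - open_diag n R i j))" for U
  have fQ: "finite {m. Q m \<noteq> 0}" using Q by (simp add: poly_rep_def poly_in_rates_def)
  have "(\<Sum>m | Q m \<noteq> 0. (Q m * rate_monomial R m \<kappa>) * t ^ total_degree R m) =
          (\<Sum>U\<in>Pow {?d..<n}. D U * t ^ card U)" if "t > 0" for t
  proof -
    have "eval_rates R Q (\<lambda>r. t * \<kappa> r) = det (jac n (open_rate n R (\<lambda>r. t * \<kappa> r)) c)"
      using Q pos that by (simp add: poly_rep_def)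
    then show ?thesis
      using perp red
      by (simp add: eval_rates_scale_rates[OF fQ] det_jac_open_rate_scale_rates D_def mult.commute)
  qed
  then have "(\<Sum>m\<in>{m\<in>{m. Q m \<noteq> 0}. total_degree R m = ?s}. Q m * rate_monomial R m \<kappa>) =
               (\<Sum>U\<in>{U\<in>Pow {?d..<n}. card U = ?s}. D U)"
    by (intro sum_powers_coeff_eq[OF fQ]) simp_all
  also have "{U\<in>Pow {?d..<n}. card U = ?s} = {{?d..<n}}"
    using \<open>stoich_dim R \<le> n\<close> card_subset_eq[of "{?d..<n}"] by auto
  also have "(\<Sum>U\<in>{{?d..<n}}. D U) = (-1) ^ ?d * det (jac n (ext_rate n R \<omega> \<kappa>) c)"
    using det_top_rows_eq_det_jac_ext_rate by (simp add: D_def)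
  finally show ?thesis
    by (simp add: eval_rates_homog_part[OF fQ])
qed

lemma poly_rep_det_jac_ext_rate:
  assumes "stoich_dim R \<le> n"
    and "\<forall>i<n - stoich_dim R. \<omega> i \<in> stoich_perp n R"
    and "\<forall>i<n - stoich_dim R. \<forall>j<n - stoich_dim R. \<omega> i j = (if i = j then 1 else 0)"
    and Q: "poly_rep R Q (\<lambda>\<kappa>. det (jac n (open_rate n R \<kappa>) c))"
  shows "poly_rep R (homog_part R (stoich_dim R) (\<lambda>m. (-1) ^ (n - stoich_dim R) * Q m))
           (\<lambda>\<kappa>. det (jac n (ext_rate n R \<omega> \<kappa>) c))"
proof -
  let ?d = "n - stoich_dim R"
  have "homog_part R (stoich_dim R) (\<lambda>m. (-1) ^ ?d * Q m) =
          (\<lambda>m. (-1) ^ ?d * homog_part R (stoich_dim R) Q m)"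
    by (simp add: homog_part_def fun_eq_iff)
  moreover have "poly_in_rates R (\<lambda>m. (-1) ^ ?d * homog_part R (stoich_dim R) Q m)"
    using poly_in_rates_homog_part[of R Q] Q by (simp add: poly_rep_def poly_in_rates_def)
  moreover have "eval_rates R (\<lambda>m. (-1) ^ ?d * homog_part R (stoich_dim R) Q m) \<kappa> =
                   (-1) ^ ?d * eval_rates R (homog_part R (stoich_dim R) Q) \<kappa>" for \<kappa>
    by (simp add: eval_rates_def sum_distrib_left mult.assoc)
  ultimately show ?thesis
    using homog_part_det_jac_open_rate[OF assms]
    by (simp add: poly_rep_def flip: power_mult_distrib)
qed

theorem corollary7p2:
  fixes n :: nat and R :: "reaction set" and \<omega> :: "nat \<Rightarrow> nat \<Rightarrow> real" and c :: "nat \<Rightarrow> real"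
  assumes network: "crn n R"
    and closed: "stoich_space R \<noteq> Rn n"
    and reduced: "reduced_basis n R \<omega>"
  shows "(\<exists>P. poly_rep R P (\<lambda>\<kappa>. det (jac n (ext_rate n R \<omega> \<kappa>) c)))
       \<and> (\<exists>Q. poly_rep R Q (\<lambda>\<kappa>. det (jac n (open_rate n R \<kappa>) c)))
       \<and> (\<forall>P Q. poly_rep R P (\<lambda>\<kappa>. det (jac n (ext_rate n R \<omega> \<kappa>) c))
              \<longrightarrow> poly_rep R Q (\<lambda>\<kappa>. det (jac n (open_rate n R \<kappa>) c))
              \<longrightarrow> P = homog_part R (stoich_dim R)
                        (\<lambda>m. (-1) ^ (n - stoich_dim R) * Q m))"
proof -
  have fin: "finite R" using network by (simp add: crn_def)
  have basis: "\<forall>i<n - stoich_dim R. \<omega> i \<in> stoich_perp n R"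
    "\<forall>i<n - stoich_dim R. \<forall>j<n - stoich_dim R. \<omega> i j = (if i = j then 1 else 0)"
    using reduced unfolding reduced_basis_def Let_def by blast+
  note ext_rep = poly_rep_det_jac_ext_rate[OF stoich_dim_le[OF network] basis]
  obtain Q where "poly_rep R Q (\<lambda>\<kappa>. det (jac n (open_rate n R \<kappa>) c))"
    using rate_polyfun_imp_poly_rep[OF rate_polyfun_det_jac_open_rate[OF fin]] by blast
  then show ?thesis
    using ext_rep poly_rep_unique[OF fin] by blast
qed

end
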